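(* Let $X_0^*$ be a $\{1,2,\dots\}$-valued random variable with $\mathbf P(X_0^*\ge2)>0$ and $\mathbf E(X_0^*m^{X_0^*})<\infty$, let $p>p_c$, let $X_0$ have law $(1-p)\delta_0+pP_{X_0^*}$, and let $n\ge0$. Then: (i) the functions $s\mapsto \varphi_n(s):=(m-1)sH_n'(s)-H_n(s)$ and $s\mapsto \varphi_n(s)/s$ are non-decreasing on $(0,m]$; (ii) $H_n(m)\le m^{1/(m-1)}\mathrm e^{\delta_n}$; (iii) for all $s\in[1,m]$, $$\frac{H_n(s)^{m-1}}{s}\ge\frac{H_n(m)^{m-1}}{m}\big[1-m(m-s)\,\delta_n\,\mathrm e^{(m-1)\delta_n}\big].$$
   Context: Fix an integer $m\ge2$. Recursive system: $X_{n+1}$ has the law of $(X_{n,1}+\cdots+X_{n,m}-1)^+$, with $X_{n,i}$ independent copies of $X_n$. $p_c:=\frac{1}{1+\mathbf E\{[(m-1)X_0^*-1]m^{X_0^*}\}}$. $H_n(s):=\mathbf E(s^{X_n})$ is the generating function of $X_n$, and $\delta_n:=m(m-1)H_n'(m)-H_n(m)=(m-1)\mathbf E(X_nm^{X_n})-\mathbf E(m^{X_n})$ (which is positive for $p>p_c$). *)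

theory Defs
  imports "HOL-Probability.Probability"
begin

fun iid_sum :: "nat pmf \<Rightarrow> nat \<Rightarrow> nat pmf" where
  "iid_sum mu 0 = return_pmf 0"
| "iid_sum mu (Suc k) = bind_pmf mu (\<lambda>x. map_pmf (\<lambda>y. x + y) (iid_sum mu k))"

text \<open>One step of the recursive system: law of (X_1 + ... + X_m - 1)^+
  (truncated natural-number subtraction is the positive part).\<close>
definition rec_step :: "nat \<Rightarrow> nat pmf \<Rightarrow> nat pmf" where
  "rec_step m mu = map_pmf (\<lambda>x. x - 1) (iid_sum mu m)"

definition rec_law :: "nat \<Rightarrow> nat pmf \<Rightarrow> nat \<Rightarrow> nat pmf" where
  "rec_law m mu0 n = (rec_step m ^^ n) mu0"

definition gen_fun :: "nat pmf \<Rightarrow> real \<Rightarrow> real" where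
  "gen_fun mu s = measure_pmf.expectation mu (\<lambda>k. s ^ k)"

text \<open>Its derivative, H'(s) = E(X s^(X-1)) (termwise derivative of the power series).\<close>
definition gen_fun_deriv :: "nat pmf \<Rightarrow> real \<Rightarrow> real" where
  "gen_fun_deriv mu s = measure_pmf.expectation mu (\<lambda>k. real k * s ^ (k - 1))"

definition p_crit :: "nat \<Rightarrow> nat pmf \<Rightarrow> real" where
  "p_crit m Xs = 1 / (1 + measure_pmf.expectation Xs
      (\<lambda>k. ((real m - 1) * real k - 1) * real m ^ k))"

end

theory Submission
  imports Defs
begin

text \<open>
  Write H for the generating function of a law on the naturals and
  phi(s) = (m - 1) s H'(s) - H(s) = E[((m - 1) X - 1) s^X], so that delta = phi(m).
  The law of a sum of m independent copies has generating function H^m; with a pointwise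
  identity absorbing the shift x - 1, this shows that one step of the recursion multiplies
  phi(m) by H(m)^(m - 1) >= 1 and keeps E(X m^X) finite. For X_0 one finds
  phi(m) = p / p_c - 1 > 0, hence delta_n > 0 for every n.
  All coefficients of phi except the constant -1 are nonnegative, which gives (i).
  By (i), phi(u) / u <= delta / m on [1, m], so u |-> (m - 1) ln H(u) - ln u - u delta / m
  is decreasing there; comparing its value at m with those at 1 and at s gives (ii) and (iii).
\<close>

lemma enn2real_power: "enn2real (x ^ k) = enn2real x ^ k"
  by (induction k) (simp_all add: enn2real_mult)

lemma nn_integral_power_iid_sum:
  fixes s :: real assumes "s \<ge> 0"
  shows "(\<integral>\<^sup>+y. ennreal (s ^ y) \<partial>iid_sum \<mu> k) = (\<integral>\<^sup>+y. ennreal (s ^ y) \<partial>\<mu>) ^ k"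
proof (induction k)
  case (Suc k)
  have "(\<integral>\<^sup>+y. ennreal (s ^ y) \<partial>iid_sum \<mu> (Suc k))
      = (\<integral>\<^sup>+x. ennreal (s ^ x) * (\<integral>\<^sup>+y. ennreal (s ^ y) \<partial>iid_sum \<mu> k) \<partial>\<mu>)"
    using assms by (simp add: power_add ennreal_mult nn_integral_cmult)
  also have "\<dots> = (\<integral>\<^sup>+x. ennreal (s ^ x) \<partial>\<mu>) * (\<integral>\<^sup>+y. ennreal (s ^ y) \<partial>iid_sum \<mu> k)"
    by (rule nn_integral_multc) auto
  finally show ?case using Suc by (simp add: mult.commute)
qed simp

lemma nn_integral_mult_power_iid_sum:
  fixes s :: real assumes "s \<ge> 0"
  shows "(\<integral>\<^sup>+y. ennreal (real y * s ^ y) \<partial>iid_sum \<mu> k) =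
     of_nat k * (\<integral>\<^sup>+y. ennreal (real y * s ^ y) \<partial>\<mu>) * (\<integral>\<^sup>+y. ennreal (s ^ y) \<partial>\<mu>) ^ (k - 1)"
proof (induction k)
  case (Suc k)
  let ?A = "\<integral>\<^sup>+y. ennreal (real y * s ^ y) \<partial>\<mu>"
  let ?B = "\<integral>\<^sup>+y. ennreal (s ^ y) \<partial>\<mu>"
  let ?SA = "\<integral>\<^sup>+y. ennreal (real y * s ^ y) \<partial>iid_sum \<mu> k"
  let ?SB = "\<integral>\<^sup>+y. ennreal (s ^ y) \<partial>iid_sum \<mu> k"
  have product_rule: "ennreal (real (x + y) * s ^ (x + y))
      = ennreal (real x * s ^ x) * ennreal (s ^ y) + ennreal (s ^ x) * ennreal (real y * s ^ y)" for x y
    using assms by (simp add: power_add ennreal_mult[symmetric] ennreal_plus[symmetric] algebra_simps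
        del: ennreal_plus)
  have "(\<integral>\<^sup>+y. ennreal (real y * s ^ y) \<partial>iid_sum \<mu> (Suc k))
      = (\<integral>\<^sup>+x. ennreal (real x * s ^ x) * ?SB + ennreal (s ^ x) * ?SA \<partial>\<mu>)"
    by (simp only: iid_sum.simps nn_integral_bind_pmf nn_integral_map_pmf product_rule)
      (simp add: nn_integral_add nn_integral_cmult)
  also have "\<dots> = ?A * ?SB + ?B * ?SA"
    by (simp add: nn_integral_add nn_integral_multc)
  also have "\<dots> = of_nat (Suc k) * ?A * ?B ^ (Suc k - 1)"
    unfolding Suc nn_integral_power_iid_sum[OF assms] by (cases k) (auto simp: algebra_simps)
  finally show ?case .
qed simp

lemma gen_fun_eq_nn_integral:
  fixes s :: real assumes "s \<ge> 0"
  shows "gen_fun \<mu> s = enn2real (\<integral>\<^sup>+k. ennreal (s ^ k) \<partial>\<mu>)"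
  unfolding gen_fun_def using assms by (intro integral_eq_nn_integral) auto

lemma mult_gen_fun_deriv_eq_expectation:
  "s * gen_fun_deriv \<mu> s = measure_pmf.expectation \<mu> (\<lambda>k. real k * s ^ k)"
proof -
  have "s * (real k * s ^ (k - 1)) = real k * s ^ k" for k
    by (cases k) simp_all
  then show ?thesis
    unfolding gen_fun_deriv_def integral_mult_right_zero[symmetric] by presburger
qed

lemma mult_gen_fun_deriv_eq_nn_integral:
  fixes s :: real assumes "s \<ge> 0"
  shows "s * gen_fun_deriv \<mu> s = enn2real (\<integral>\<^sup>+k. ennreal (real k * s ^ k) \<partial>\<mu>)"
  unfolding mult_gen_fun_deriv_eq_expectation using assms by (intro integral_eq_nn_integral) auto

lemma gen_fun_iid_sum:
  fixes s :: real assumes "s \<ge> 0"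
  shows "gen_fun (iid_sum \<mu> k) s = gen_fun \<mu> s ^ k"
  using assms by (simp add: gen_fun_eq_nn_integral nn_integral_power_iid_sum enn2real_power)

lemma gen_fun_deriv_iid_sum:
  fixes s :: real assumes "s \<ge> 0"
  shows "s * gen_fun_deriv (iid_sum \<mu> k) s = real k * (s * gen_fun_deriv \<mu> s) * gen_fun \<mu> s ^ (k - 1)"
  using assms by (simp add: gen_fun_eq_nn_integral mult_gen_fun_deriv_eq_nn_integral
      nn_integral_mult_power_iid_sum enn2real_power enn2real_mult)

lemma power_le_one_plus_mult_power:
  fixes c :: real assumes "c \<ge> 1"
  shows "c ^ k \<le> 1 + real k * c ^ k"
proof -
  have "c ^ k \<le> real k * c ^ k" if "k > 0"
    using assms that by (simp add: mult_le_cancel_right1)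
  then show ?thesis by (cases "k = 0") auto
qed

lemma integrable_gen_fun_terms:
  fixes \<mu> :: "nat pmf" and M s :: real
  assumes int: "integrable \<mu> (\<lambda>k. real k * M ^ k)" and "M \<ge> 1" "\<bar>s\<bar> \<le> M"
  shows "integrable \<mu> (\<lambda>k. s ^ k)"
    and "integrable \<mu> (\<lambda>k. real k * s ^ k)"
    and "integrable \<mu> (\<lambda>k. real k * s ^ (k - 1))"
proof -
  have pow: "\<bar>s\<bar> ^ k \<le> M ^ k" for k
    using assms by (intro power_mono) auto
  have "\<bar>s\<bar> ^ k \<le> 1 + real k * M ^ k" for k
    using pow[of k] power_le_one_plus_mult_power[OF \<open>M \<ge> 1\<close>, of k] by linarith
  then have bound_power: "norm (s ^ k) \<le> norm (1 + real k * M ^ k)" for k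
    using \<open>M \<ge> 1\<close> by (simp add: power_abs)
  have "integrable \<mu> (\<lambda>k. 1 + real k * M ^ k)"
    using int by simp
  show "integrable \<mu> (\<lambda>k. s ^ k)"
    by (intro Bochner_Integration.integrable_bound[OF \<open>integrable \<mu> (\<lambda>k. 1 + real k * M ^ k)\<close>]
        AE_I2 bound_power) simp
  have bound_mult_power: "norm (real k * s ^ k) \<le> norm (real k * M ^ k)" for k
    using pow[of k] \<open>M \<ge> 1\<close> by (simp add: abs_mult power_abs mult_left_mono)
  show "integrable \<mu> (\<lambda>k. real k * s ^ k)"
    by (intro Bochner_Integration.integrable_bound[OF int] AE_I2 bound_mult_power) simp
  have "\<bar>s\<bar> ^ (k - 1) \<le> M ^ k" for k
    using pow[of "k - 1"] power_increasing[of "k - 1" k M] \<open>M \<ge> 1\<close> by simp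
  then have bound_deriv: "norm (real k * s ^ (k - 1)) \<le> norm (real k * M ^ k)" for k
    using \<open>M \<ge> 1\<close> by (simp add: abs_mult power_abs mult_left_mono)
  show "integrable \<mu> (\<lambda>k. real k * s ^ (k - 1))"
    by (intro Bochner_Integration.integrable_bound[OF int] AE_I2 bound_deriv) simp
qed

lemma integrable_mult_power_iid_sum:
  fixes \<mu> :: "nat pmf" and M :: real
  assumes int: "integrable \<mu> (\<lambda>k. real k * M ^ k)" and "M \<ge> 1"
  shows "integrable (iid_sum \<mu> j) (\<lambda>k. real k * M ^ k)"
proof -
  have "(\<integral>\<^sup>+k. ennreal (real k * M ^ k) \<partial>\<mu>) < \<infinity>"
    using int \<open>M \<ge> 1\<close> by (simp add: integrable_iff_bounded)
  moreover have "(\<integral>\<^sup>+k. ennreal (M ^ k) \<partial>\<mu>) < \<infinity>"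
    using integrable_gen_fun_terms(1)[OF assms, of M] \<open>M \<ge> 1\<close> by (simp add: integrable_iff_bounded)
  ultimately show ?thesis
    using \<open>M \<ge> 1\<close> by (simp add: integrable_iff_bounded nn_integral_mult_power_iid_sum
        ennreal_mult_less_top power_less_top_ennreal of_nat_less_top)
qed

lemma integrable_mult_power_rec_step:
  fixes \<mu> :: "nat pmf" and M :: real
  assumes "integrable \<mu> (\<lambda>k. real k * M ^ k)" and "M \<ge> 1"
  shows "integrable (rec_step m \<mu>) (\<lambda>k. real k * M ^ k)"
  unfolding rec_step_def integrable_map_pmf_eq
  using integrable_mult_power_iid_sum[OF assms]
  by (rule Bochner_Integration.integrable_bound)
    (use \<open>M \<ge> 1\<close> in \<open>auto intro!: mult_mono power_increasing\<close>)

definition gen_fun_phi :: "nat \<Rightarrow> nat pmf \<Rightarrow> real \<Rightarrow> real" where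
  "gen_fun_phi m \<mu> s = (real m - 1) * s * gen_fun_deriv \<mu> s - gen_fun \<mu> s"

lemma gen_fun_phi_rec_step:
  fixes \<mu> :: "nat pmf"
  assumes "m \<ge> 2" and int: "integrable \<mu> (\<lambda>k. real k * real m ^ k)"
  shows "gen_fun_phi m (rec_step m \<mu>) (real m) = gen_fun \<mu> (real m) ^ (m - 1) * gen_fun_phi m \<mu> (real m)"
proof -
  define M where "M = real m"
  define S where "S = iid_sum \<mu> m"
  have "M \<ge> 1" using \<open>m \<ge> 2\<close> by (simp add: M_def)
  have int_S: "integrable S (\<lambda>k. real k * M ^ k)"
    unfolding S_def M_def using int \<open>m \<ge> 2\<close> by (intro integrable_mult_power_iid_sum) auto
  have "integrable (rec_step m \<mu>) (\<lambda>k. real k * M ^ k)"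
    unfolding M_def using int \<open>m \<ge> 2\<close> by (intro integrable_mult_power_rec_step) auto
  then have int_step: "integrable S (\<lambda>k. real (k - 1) * M ^ (k - 1))" "integrable S (\<lambda>k. M ^ (k - 1))"
    using integrable_gen_fun_terms(1)[of "rec_step m \<mu>" M M] \<open>M \<ge> 1\<close>
    by (auto simp: rec_step_def S_def)
  \<comment> \<open>absorbs the shift \<open>x \<mapsto> (x - 1)\<^sup>+\<close>; at \<open>k = 0\<close> both sides are \<open>-1\<close>\<close>
  have shift: "(M - 1) * (real (k - 1) * M ^ (k - 1)) - M ^ (k - 1) = (M - 1) / M * (real k * M ^ k) - M ^ k" for k
    using \<open>M \<ge> 1\<close> by (cases k) (auto simp: field_simps)
  have "gen_fun_phi m (rec_step m \<mu>) M
      = (M - 1) * measure_pmf.expectation S (\<lambda>k. real (k - 1) * M ^ (k - 1))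
        - measure_pmf.expectation S (\<lambda>k. M ^ (k - 1))"
    by (simp add: gen_fun_phi_def mult.assoc mult_gen_fun_deriv_eq_expectation M_def)
      (simp add: gen_fun_def rec_step_def S_def)
  also have "\<dots> = measure_pmf.expectation S (\<lambda>k. (M - 1) * (real (k - 1) * M ^ (k - 1)) - M ^ (k - 1))"
    using int_step by simp
  also have "\<dots> = measure_pmf.expectation S (\<lambda>k. (M - 1) / M * (real k * M ^ k) - M ^ k)"
    by (simp only: shift)
  also have "\<dots> = (M - 1) / M * measure_pmf.expectation S (\<lambda>k. real k * M ^ k) - gen_fun S M"
    using int_S integrable_gen_fun_terms(1)[OF int_S \<open>M \<ge> 1\<close>, of M] \<open>M \<ge> 1\<close>
    by (subst Bochner_Integration.integral_diff) (auto simp: gen_fun_def)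
  also have "\<dots> = (M - 1) / M * (M * (M * gen_fun_deriv \<mu> M) * gen_fun \<mu> M ^ (m - 1)) - gen_fun \<mu> M ^ m"
    using \<open>M \<ge> 1\<close> by (simp add: S_def M_def gen_fun_iid_sum gen_fun_deriv_iid_sum
        flip: mult_gen_fun_deriv_eq_expectation)
  also have "\<dots> = gen_fun \<mu> M ^ (m - 1) * gen_fun_phi m \<mu> M"
    using \<open>M \<ge> 1\<close> \<open>m \<ge> 2\<close> by (cases m) (auto simp: gen_fun_phi_def M_def field_simps)
  finally show ?thesis by (simp add: M_def)
qed

lemma expectation_pmf_sums:
  fixes \<mu> :: "nat pmf" and f :: "nat \<Rightarrow> real"
  assumes "integrable \<mu> f"
  shows "(\<lambda>k. pmf \<mu> k * f k) sums measure_pmf.expectation \<mu> f"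
proof -
  have "integrable (count_space UNIV) (\<lambda>k. pmf \<mu> k * f k)"
    using assms unfolding measure_pmf_eq_density by (subst (asm) integrable_density) auto
  moreover have "measure_pmf.expectation \<mu> f = integral\<^sup>L (count_space UNIV) (\<lambda>k. pmf \<mu> k * f k)"
    unfolding measure_pmf_eq_density by (subst integral_density) auto
  ultimately show ?thesis
    using sums_integral_count_space_nat by simp
qed

lemma gen_fun_has_real_derivative:
  fixes \<mu> :: "nat pmf" and M x :: real
  assumes int: "integrable \<mu> (\<lambda>k. real k * M ^ k)" and "M \<ge> 1" "\<bar>x\<bar> < M"
  shows "(gen_fun \<mu> has_real_derivative gen_fun_deriv \<mu> x) (at x)"
proof -
  define a where "a = pmf \<mu>"
  have series: "(\<lambda>k. a k * s ^ k) sums gen_fun \<mu> s" if "\<bar>s\<bar> \<le> M" for s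
    unfolding a_def gen_fun_def
    by (rule expectation_pmf_sums[OF integrable_gen_fun_terms(1)[OF int \<open>M \<ge> 1\<close> that]])
  have deriv_series: "(\<lambda>k. of_nat k * a k * x ^ (k - Suc 0)) sums gen_fun_deriv \<mu> x"
    using expectation_pmf_sums[OF integrable_gen_fun_terms(3)[OF int \<open>M \<ge> 1\<close>, of x]] \<open>\<bar>x\<bar> < M\<close>
    by (simp add: a_def gen_fun_deriv_def algebra_simps)
  have "summable (\<lambda>k. a k * M ^ k)"
    using series[of M] \<open>M \<ge> 1\<close> by (simp add: sums_iff)
  then have "((\<lambda>s. \<Sum>k. a k * s ^ k) has_field_derivative (\<Sum>k. diffs a k * x ^ k)) (at x)"
    by (rule termdiffs_strong) (use \<open>\<bar>x\<bar> < M\<close> in simp)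
  moreover have "summable (\<lambda>k. diffs a k * x ^ k)"
    by (rule termdiff_converges[where K = M]) (use \<open>\<bar>x\<bar> < M\<close> series in \<open>auto simp: sums_iff\<close>)
  then have "(\<Sum>k. diffs a k * x ^ k) = gen_fun_deriv \<mu> x"
    using diffs_equiv deriv_series sums_unique2 by blast
  ultimately have "((\<lambda>s. \<Sum>k. a k * s ^ k) has_real_derivative gen_fun_deriv \<mu> x) (at x)"
    by simp
  then show ?thesis
    by (rule has_field_derivative_transform_within_open[where S = "{-M<..<M}"])
      (use \<open>\<bar>x\<bar> < M\<close> series in \<open>auto simp: sums_iff\<close>)
qed

lemma continuous_on_gen_fun:
  fixes \<mu> :: "nat pmf" and M :: real
  assumes int: "integrable \<mu> (\<lambda>k. real k * M ^ k)" and "M \<ge> 1"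
  shows "continuous_on {-M..M} (gen_fun \<mu>)"
proof -
  have series: "(\<lambda>k. pmf \<mu> k * s ^ k) sums gen_fun \<mu> s" if "\<bar>s\<bar> \<le> M" for s
    unfolding gen_fun_def
    by (rule expectation_pmf_sums[OF integrable_gen_fun_terms(1)[OF int \<open>M \<ge> 1\<close> that]])
  have "uniform_limit {-M..M} (\<lambda>n s. \<Sum>k<n. pmf \<mu> k * s ^ k) (\<lambda>s. \<Sum>k. pmf \<mu> k * s ^ k) sequentially"
  proof (rule Weierstrass_m_test)
    show "summable (\<lambda>k. pmf \<mu> k * M ^ k)"
      using series[of M] \<open>M \<ge> 1\<close> by (simp add: sums_iff)
    fix k and s :: real assume "s \<in> {-M..M}"
    then have "\<bar>s\<bar> ^ k \<le> M ^ k" by (intro power_mono) auto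
    then show "norm (pmf \<mu> k * s ^ k) \<le> pmf \<mu> k * M ^ k"
      by (simp add: abs_mult power_abs mult_left_mono)
  qed
  then have "continuous_on {-M..M} (\<lambda>s. \<Sum>k. pmf \<mu> k * s ^ k)"
    by (rule uniform_limit_theorem[rotated]) (auto intro!: continuous_intros always_eventually)
  moreover have "(\<Sum>k. pmf \<mu> k * s ^ k) = gen_fun \<mu> s" if "s \<in> {-M..M}" for s
    using series[of s] that by (simp add: sums_iff abs_le_iff)
  ultimately show ?thesis
    by (rule continuous_on_eq)
qed

lemma gen_fun_phi_eq_expectation:
  fixes \<mu> :: "nat pmf"
  assumes "integrable \<mu> (\<lambda>k. real k * real m ^ k)" "m \<ge> 1" "\<bar>s\<bar> \<le> real m"
  shows "integrable \<mu> (\<lambda>k. ((real m - 1) * real k - 1) * s ^ k)"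
    and "gen_fun_phi m \<mu> s = measure_pmf.expectation \<mu> (\<lambda>k. ((real m - 1) * real k - 1) * s ^ k)"
proof -
  have terms: "(\<lambda>k. ((real m - 1) * real k - 1) * s ^ k) = (\<lambda>k. (real m - 1) * (real k * s ^ k) - s ^ k)"
    by (simp add: algebra_simps)
  have "integrable \<mu> (\<lambda>k. real k * s ^ k)" "integrable \<mu> (\<lambda>k. s ^ k)"
    using integrable_gen_fun_terms[OF assms(1)] assms(2,3) by auto
  then show "integrable \<mu> (\<lambda>k. ((real m - 1) * real k - 1) * s ^ k)"
    and "gen_fun_phi m \<mu> s = measure_pmf.expectation \<mu> (\<lambda>k. ((real m - 1) * real k - 1) * s ^ k)"
    unfolding terms
    by (simp_all add: gen_fun_phi_def mult.assoc mult_gen_fun_deriv_eq_expectation gen_fun_def)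
qed

lemma mono_on_gen_fun_phi:
  fixes \<mu> :: "nat pmf"
  assumes int: "integrable \<mu> (\<lambda>k. real k * real m ^ k)" and "m \<ge> 2"
  shows "mono_on {0<..real m} (gen_fun_phi m \<mu>)"
proof (rule mono_onI)
  fix s t assume st: "s \<in> {0<..real m}" "t \<in> {0<..real m}" "s \<le> t"
  have "((real m - 1) * real k - 1) * s ^ k \<le> ((real m - 1) * real k - 1) * t ^ k" for k
  proof (cases "k = 0")
    case False
    then have "1 \<le> (real m - 1) * real k"
      using \<open>m \<ge> 2\<close> mult_mono[of 1 "real m - 1" 1 "real k"] by simp
    then show ?thesis
      using st by (intro mult_left_mono power_mono) auto
  qed simp
  then show "gen_fun_phi m \<mu> s \<le> gen_fun_phi m \<mu> t"
    using st \<open>m \<ge> 2\<close> gen_fun_phi_eq_expectation[OF int]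
    by (auto intro!: integral_mono)
qed

lemma mono_on_gen_fun_phi_div:
  fixes \<mu> :: "nat pmf"
  assumes int: "integrable \<mu> (\<lambda>k. real k * real m ^ k)" and "m \<ge> 2"
  shows "mono_on {0<..real m} (\<lambda>s. gen_fun_phi m \<mu> s / s)"
proof (rule mono_onI)
  fix s t assume st: "s \<in> {0<..real m}" "t \<in> {0<..real m}" "s \<le> t"
  have "((real m - 1) * real k - 1) * s ^ k / s \<le> ((real m - 1) * real k - 1) * t ^ k / t" for k
  proof (cases k)
    case (Suc j)
    then have "1 \<le> (real m - 1) * real k"
      using \<open>m \<ge> 2\<close> mult_mono[of 1 "real m - 1" 1 "real k"] by simp
    then have "((real m - 1) * real k - 1) * s ^ j \<le> ((real m - 1) * real k - 1) * t ^ j"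
      using st by (intro mult_left_mono power_mono) auto
    then show ?thesis
      using st Suc by simp
  qed (use st in \<open>simp add: frac_le\<close>)
  moreover have expectation: "gen_fun_phi m \<mu> u / u
      = measure_pmf.expectation \<mu> (\<lambda>k. ((real m - 1) * real k - 1) * u ^ k / u)"
    if "u \<in> {0<..real m}" for u
    using that \<open>m \<ge> 2\<close> gen_fun_phi_eq_expectation(2)[OF int] by simp
  ultimately show "gen_fun_phi m \<mu> s / s \<le> gen_fun_phi m \<mu> t / t"
    unfolding expectation[OF st(1)] expectation[OF st(2)]
    using st \<open>m \<ge> 2\<close> gen_fun_phi_eq_expectation(1)[OF int]
    by (intro integral_mono) auto
qed

lemma gen_fun_ge_one:
  fixes \<mu> :: "nat pmf" and M s :: real
  assumes "integrable \<mu> (\<lambda>k. real k * M ^ k)" and "1 \<le> s" "s \<le> M"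
  shows "gen_fun \<mu> s \<ge> 1"
proof -
  have "measure_pmf.expectation \<mu> (\<lambda>k. 1) \<le> measure_pmf.expectation \<mu> (\<lambda>k. s ^ k)"
    using assms integrable_gen_fun_terms(1)[OF assms(1), of s] by (intro integral_mono) auto
  then show ?thesis by (simp add: gen_fun_def)
qed

lemma divide_le_of_le_nonneg:
  fixes y b h :: real
  assumes "y \<le> b" "b \<ge> 0" "h \<ge> 1"
  shows "y / h \<le> b"
proof (cases "y \<ge> 0")
  case True
  then have "y / h \<le> y"
    using assms(3) by (simp add: divide_le_eq mult_le_cancel_left1)
  then show ?thesis using assms(1) by linarith
next
  case False
  then have "y / h \<le> 0"
    using assms(3) by (simp add: divide_nonpos_pos)
  then show ?thesis using assms(2) by linarith
qed

lemma ln_gen_fun_comparison: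
  fixes \<mu> :: "nat pmf" and m :: nat
  defines "\<delta> \<equiv> gen_fun_phi m \<mu> (real m)"
  assumes int: "integrable \<mu> (\<lambda>k. real k * real m ^ k)" and "m \<ge> 2" "\<delta> \<ge> 0"
    and s: "1 \<le> s" "s \<le> real m"
  shows "(real m - 1) * ln (gen_fun \<mu> (real m)) - ln (real m) - \<delta>
    \<le> (real m - 1) * ln (gen_fun \<mu> s) - ln s - s * \<delta> / real m"
proof -
  define M where "M = real m"
  define g where "g u = (M - 1) * ln (gen_fun \<mu> u) - ln u - u * \<delta> / M" for u
  have "M \<ge> 2" using \<open>m \<ge> 2\<close> by (simp add: M_def)
  have H_ge_one: "gen_fun \<mu> u \<ge> 1" if "1 \<le> u" "u \<le> M" for u
    using gen_fun_ge_one[OF int] that by (simp add: M_def)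
  have "g M \<le> g s"
  proof (rule DERIV_nonpos_imp_decreasing_open[where f = g])
    show "s \<le> M" using s by (simp add: M_def)
  next
    have "gen_fun \<mu> x \<noteq> 0" if "x \<in> {s..M}" for x
      using H_ge_one[of x] that s by simp
    then show "continuous_on {s..M} g"
      unfolding g_def
      using continuous_on_subset[OF continuous_on_gen_fun[OF int], of "{s..M}"] s \<open>M \<ge> 2\<close>
      by (intro continuous_intros) (auto simp: M_def)
  next
    fix x assume x: "s < x" "x < M"
    have H: "gen_fun \<mu> x \<ge> 1" using H_ge_one x s by auto
    have "(gen_fun \<mu> has_real_derivative gen_fun_deriv \<mu> x) (at x)"
      using x s \<open>m \<ge> 2\<close> by (intro gen_fun_has_real_derivative[OF int]) (auto simp: M_def)
    then have "(g has_real_derivative (M - 1) * (gen_fun_deriv \<mu> x / gen_fun \<mu> x) - 1 / x - \<delta> / M) (at x)"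
      unfolding g_def using H x s \<open>M \<ge> 2\<close> by (auto intro!: derivative_eq_intros simp: field_simps)
    moreover have "(M - 1) * (gen_fun_deriv \<mu> x / gen_fun \<mu> x) - 1 / x = (gen_fun_phi m \<mu> x / x) / gen_fun \<mu> x"
      using H x s by (simp add: gen_fun_phi_def M_def field_simps)
    moreover have "gen_fun_phi m \<mu> x / x \<le> \<delta> / M"
      using mono_onD[OF mono_on_gen_fun_phi_div[OF int \<open>m \<ge> 2\<close>], of x M] x s
      by (simp add: \<delta>_def M_def)
    then have "(gen_fun_phi m \<mu> x / x) / gen_fun \<mu> x \<le> \<delta> / M"
      by (rule divide_le_of_le_nonneg[OF _ _ H]) (use \<open>\<delta> \<ge> 0\<close> \<open>M \<ge> 2\<close> in simp)
    ultimately show "\<exists>y. (g has_real_derivative y) (at x) \<and> y \<le> 0"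
      by auto
  qed
  then show ?thesis
    using \<open>M \<ge> 2\<close> by (simp add: g_def M_def)
qed

lemma gen_fun_le_powr_exp:
  fixes \<mu> :: "nat pmf" and m :: nat
  defines "\<delta> \<equiv> gen_fun_phi m \<mu> (real m)"
  assumes int: "integrable \<mu> (\<lambda>k. real k * real m ^ k)" and "m \<ge> 2" "\<delta> \<ge> 0"
  shows "gen_fun \<mu> (real m) \<le> real m powr (1 / (real m - 1)) * exp \<delta>"
proof -
  define M where "M = real m"
  have "M \<ge> 2" using \<open>m \<ge> 2\<close> by (simp add: M_def)
  have "gen_fun \<mu> M \<ge> 1"
    using gen_fun_ge_one[OF int, of M] \<open>M \<ge> 2\<close> by (simp add: M_def)
  have "(M - 1) * ln (gen_fun \<mu> M) - ln M - \<delta> \<le> - \<delta> / M"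
    using ln_gen_fun_comparison[OF int \<open>m \<ge> 2\<close>, of 1] \<open>\<delta> \<ge> 0\<close> \<open>M \<ge> 2\<close>
    by (simp add: \<delta>_def M_def gen_fun_def)
  moreover have "\<delta> / M \<ge> 0" "\<delta> \<le> (M - 1) * \<delta>"
    using \<open>\<delta> \<ge> 0\<close> \<open>M \<ge> 2\<close> by (simp_all add: mult_le_cancel_right1)
  ultimately have "(M - 1) * ln (gen_fun \<mu> M) \<le> ln M + (M - 1) * \<delta>"
    by linarith
  also have "\<dots> = (M - 1) * (ln M / (M - 1) + \<delta>)"
    using \<open>M \<ge> 2\<close> by (simp add: field_simps)
  finally have "ln (gen_fun \<mu> M) \<le> ln M / (M - 1) + \<delta>"
    using \<open>M \<ge> 2\<close> by simp
  then have "gen_fun \<mu> M \<le> exp (ln M / (M - 1) + \<delta>)"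
    using \<open>gen_fun \<mu> M \<ge> 1\<close> by (metis exp_le_cancel_iff exp_ln order_less_le_trans zero_less_one)
  then show ?thesis
    using \<open>M \<ge> 2\<close> by (simp add: M_def powr_def exp_add)
qed

lemma gen_fun_power_div_le_exp:
  fixes \<mu> :: "nat pmf" and m :: nat
  defines "\<delta> \<equiv> gen_fun_phi m \<mu> (real m)"
  assumes int: "integrable \<mu> (\<lambda>k. real k * real m ^ k)" and "m \<ge> 2" "\<delta> \<ge> 0"
    and s: "1 \<le> s" "s \<le> real m"
  shows "gen_fun \<mu> (real m) ^ (m - 1) / real m \<le> gen_fun \<mu> s ^ (m - 1) / s * exp ((real m - s) * \<delta> / real m)"
proof -
  define M where "M = real m"
  define A where "A = gen_fun \<mu> M ^ (m - 1) / M"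
  define B where "B = gen_fun \<mu> s ^ (m - 1) / s"
  have "M \<ge> 2" "real (m - 1) = M - 1" using \<open>m \<ge> 2\<close> by (simp_all add: M_def of_nat_diff)
  have "gen_fun \<mu> M \<ge> 1" "gen_fun \<mu> s \<ge> 1"
    using gen_fun_ge_one[OF int] s \<open>M \<ge> 2\<close> by (auto simp: M_def)
  then have "A > 0" "B > 0"
    using s \<open>M \<ge> 2\<close> by (simp_all add: A_def B_def)
  have "ln A = (M - 1) * ln (gen_fun \<mu> M) - ln M" "ln B = (M - 1) * ln (gen_fun \<mu> s) - ln s"
    using \<open>gen_fun \<mu> M \<ge> 1\<close> \<open>gen_fun \<mu> s \<ge> 1\<close> s \<open>M \<ge> 2\<close> \<open>real (m - 1) = M - 1\<close>
    by (simp_all add: A_def B_def ln_div ln_realpow)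
  moreover have "(M - s) * \<delta> / M = \<delta> - s * \<delta> / M"
    using \<open>M \<ge> 2\<close> by (simp add: field_simps)
  ultimately have "ln A \<le> ln B + (M - s) * \<delta> / M"
    using ln_gen_fun_comparison[OF int \<open>m \<ge> 2\<close> _ s] \<open>\<delta> \<ge> 0\<close>
    by (simp add: \<delta>_def M_def)
  have "A = exp (ln A)"
    using \<open>A > 0\<close> by simp
  also have "\<dots> \<le> exp (ln B + (M - s) * \<delta> / M)"
    using \<open>ln A \<le> ln B + (M - s) * \<delta> / M\<close> by simp
  also have "\<dots> = B * exp ((M - s) * \<delta> / M)"
    using \<open>B > 0\<close> by (simp add: exp_add)
  finally show ?thesis
    by (simp add: A_def B_def M_def)
qed

lemma gen_fun_power_div_ge:
  fixes \<mu> :: "nat pmf" and m :: nat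
  defines "\<delta> \<equiv> gen_fun_phi m \<mu> (real m)"
  assumes int: "integrable \<mu> (\<lambda>k. real k * real m ^ k)" and "m \<ge> 2" "\<delta> \<ge> 0"
    and s: "1 \<le> s" "s \<le> real m"
  shows "gen_fun \<mu> s ^ (m - 1) / s \<ge>
    gen_fun \<mu> (real m) ^ (m - 1) / real m * (1 - real m * (real m - s) * \<delta> * exp ((real m - 1) * \<delta>))"
proof -
  define M where "M = real m"
  define A where "A = gen_fun \<mu> M ^ (m - 1) / M"
  define B where "B = gen_fun \<mu> s ^ (m - 1) / s"
  define c where "c = (M - s) * \<delta> / M"
  have "M \<ge> 2" using \<open>m \<ge> 2\<close> by (simp add: M_def)
  have "A > 0"
    using gen_fun_ge_one[OF int, of M] \<open>M \<ge> 2\<close> by (simp add: A_def M_def)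
  have "A \<le> B * exp c"
    using gen_fun_power_div_le_exp[OF int \<open>m \<ge> 2\<close> _ s] \<open>\<delta> \<ge> 0\<close>
    by (simp add: A_def B_def c_def M_def \<delta>_def)
  then have "A * exp (- c) \<le> B"
    by (simp add: exp_minus field_simps)
  moreover have "A * (1 - c) \<le> A * exp (- c)"
    using \<open>A > 0\<close> exp_ge_add_one_self[of "- c"] by simp
  moreover have "c \<le> M * (M - s) * \<delta> * exp ((M - 1) * \<delta>)"
  proof -
    have "(M - s) * \<delta> \<ge> 0" using s \<open>\<delta> \<ge> 0\<close> by (simp add: M_def)
    have "1 \<le> M * exp ((M - 1) * \<delta>)"
      using mult_mono[of 1 M 1 "exp ((M - 1) * \<delta>)"] \<open>M \<ge> 2\<close> \<open>\<delta> \<ge> 0\<close> by simp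
    have "c \<le> (M - s) * \<delta>"
      unfolding c_def using \<open>(M - s) * \<delta> \<ge> 0\<close> \<open>M \<ge> 2\<close>
      by (simp add: divide_le_eq mult_le_cancel_left1)
    also have "\<dots> \<le> (M - s) * \<delta> * (M * exp ((M - 1) * \<delta>))"
      using \<open>(M - s) * \<delta> \<ge> 0\<close> \<open>1 \<le> M * exp ((M - 1) * \<delta>)\<close> by (simp add: mult_le_cancel_left1)
    finally show ?thesis
      by (simp add: algebra_simps)
  qed
  then have "A * (1 - M * (M - s) * \<delta> * exp ((M - 1) * \<delta>)) \<le> A * (1 - c)"
    using \<open>A > 0\<close> by simp
  ultimately show ?thesis
    unfolding A_def B_def M_def by linarith
qed

lemma rec_law_invariant:
  fixes \<mu> :: "nat pmf"
  assumes "m \<ge> 2" "integrable \<mu> (\<lambda>k. real k * real m ^ k)" "gen_fun_phi m \<mu> (real m) > 0"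
  shows "integrable (rec_law m \<mu> n) (\<lambda>k. real k * real m ^ k) \<and> gen_fun_phi m (rec_law m \<mu> n) (real m) > 0"
proof (induction n)
  case 0
  then show ?case using assms by (simp add: rec_law_def)
next
  case (Suc n)
  let ?\<nu> = "rec_law m \<mu> n"
  have "rec_law m \<mu> (Suc n) = rec_step m ?\<nu>"
    by (simp add: rec_law_def)
  moreover have "gen_fun ?\<nu> (real m) ^ (m - 1) > 0"
    using Suc \<open>m \<ge> 2\<close> gen_fun_ge_one[of ?\<nu> "real m" "real m"] by simp
  ultimately show ?case
    using Suc \<open>m \<ge> 2\<close> by (simp add: gen_fun_phi_rec_step integrable_mult_power_rec_step)
qed

lemma nn_integral_mixture:
  fixes X0 Xs :: "nat pmf" and p :: real and f :: "nat \<Rightarrow> ennreal"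
  assumes X0: "\<And>k. pmf X0 k = (1 - p) * (if k = 0 then 1 else 0) + p * pmf Xs k"
    and "0 \<le> p" "p \<le> 1"
  shows "(\<integral>\<^sup>+k. f k \<partial>X0) = ennreal (1 - p) * f 0 + ennreal p * (\<integral>\<^sup>+k. f k \<partial>Xs)"
proof -
  have "ennreal (pmf X0 k) * f k
      = ennreal (1 - p) * (f 0 * indicator {0} k) + ennreal p * (ennreal (pmf Xs k) * f k)" for k
    using assms by (cases "k = 0") (simp_all add: ennreal_plus ennreal_mult distrib_right mult.assoc)
  then have "(\<integral>\<^sup>+k. f k \<partial>X0) = ennreal (1 - p) * (\<integral>\<^sup>+k. f 0 * indicator {0} k \<partial>count_space UNIV)
      + ennreal p * (\<integral>\<^sup>+k. ennreal (pmf Xs k) * f k \<partial>count_space UNIV)"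
    by (simp add: nn_integral_measure_pmf nn_integral_add nn_integral_cmult)
  then show ?thesis
    by (simp add: nn_integral_cmult_indicator flip: nn_integral_measure_pmf)
qed

lemma gen_fun_phi_mixture:
  fixes X0 Xs :: "nat pmf" and p :: real
  assumes X0: "\<And>k. pmf X0 k = (1 - p) * (if k = 0 then 1 else 0) + p * pmf Xs k"
    and p: "0 \<le> p" "p \<le> 1" and int: "integrable Xs (\<lambda>k. real k * real m ^ k)" and "m \<ge> 1"
  shows "integrable X0 (\<lambda>k. real k * real m ^ k)"
    and "gen_fun_phi m X0 (real m) = p * (1 + gen_fun_phi m Xs (real m)) - 1"
proof -
  define M where "M = real m"
  have A: "(\<integral>\<^sup>+k. ennreal (real k * M ^ k) \<partial>Xs) < \<infinity>"
    using int by (simp add: integrable_iff_bounded M_def)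
  have B: "(\<integral>\<^sup>+k. ennreal (M ^ k) \<partial>Xs) < \<infinity>"
    using integrable_gen_fun_terms(1)[OF int, of M] \<open>m \<ge> 1\<close> by (simp add: integrable_iff_bounded M_def)
  have mix: "(\<integral>\<^sup>+k. f k \<partial>X0) = ennreal (1 - p) * f 0 + ennreal p * (\<integral>\<^sup>+k. f k \<partial>Xs)" for f
    by (rule nn_integral_mixture[OF X0 p])
  show "integrable X0 (\<lambda>k. real k * real m ^ k)"
    using A p by (simp add: integrable_iff_bounded mix M_def ennreal_mult_less_top)
  have "M * gen_fun_deriv X0 M = p * (M * gen_fun_deriv Xs M)"
    using p by (simp add: mult_gen_fun_deriv_eq_nn_integral M_def mix enn2real_mult)
  moreover have "gen_fun X0 M = (1 - p) + p * gen_fun Xs M"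
    using p B by (simp add: gen_fun_eq_nn_integral M_def mix enn2real_plus enn2real_mult ennreal_mult_less_top)
  ultimately show "gen_fun_phi m X0 (real m) = p * (1 + gen_fun_phi m Xs (real m)) - 1"
    using \<open>m \<ge> 1\<close> by (simp add: gen_fun_phi_def M_def algebra_simps)
qed

lemma gen_fun_phi_nonneg:
  fixes \<mu> :: "nat pmf"
  assumes "pmf \<mu> 0 = 0" "integrable \<mu> (\<lambda>k. real k * real m ^ k)" "m \<ge> 2"
  shows "gen_fun_phi m \<mu> (real m) \<ge> 0"
proof -
  have "((real m - 1) * real k - 1) * real m ^ k \<ge> 0" if "k \<in> set_pmf \<mu>" for k
  proof -
    have "k \<ge> 1" using that assms(1) by (cases k) (auto simp: set_pmf_iff)
    then have "1 \<le> (real m - 1) * real k"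
      using \<open>m \<ge> 2\<close> mult_mono[of 1 "real m - 1" 1 "real k"] by simp
    then show ?thesis by simp
  qed
  then show ?thesis
    using assms(2,3) by (simp add: gen_fun_phi_eq_expectation AE_pmfI integral_nonneg_AE)
qed

theorem lemma3p2:
  fixes m :: nat and Xs X0 :: "nat pmf" and p :: real and n :: nat
  assumes hm: "m \<ge> 2"
    and hpos: "pmf Xs 0 = 0"
    and hge2: "measure_pmf.prob Xs {2..} > 0"
    and hint: "integrable (measure_pmf Xs) (\<lambda>k. real k * real m ^ k)"
    and hp: "p_crit m Xs < p" "p \<le> 1"
    and hX0: "\<And>k. pmf X0 k = (1 - p) * (if k = 0 then 1 else 0) + p * pmf Xs k"
  defines "H \<equiv> gen_fun (rec_law m X0 n)"
    and "H' \<equiv> gen_fun_deriv (rec_law m X0 n)"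
  defines "\<phi> \<equiv> (\<lambda>s. (real m - 1) * s * H' s - H s)"
    and "\<delta> \<equiv> real m * (real m - 1) * H' (real m) - H (real m)"
  shows "mono_on {0<..real m} \<phi> \<and> mono_on {0<..real m} (\<lambda>s. \<phi> s / s)
      \<and> H (real m) \<le> real m powr (1 / (real m - 1)) * exp \<delta>
      \<and> (\<forall>s \<in> {1..real m}. H s ^ (m - 1) / s \<ge>
           H (real m) ^ (m - 1) / real m
             * (1 - real m * (real m - s) * \<delta> * exp ((real m - 1) * \<delta>)))"
proof -
  let ?\<nu> = "rec_law m X0 n"
  have "p_crit m Xs = 1 / (1 + gen_fun_phi m Xs (real m))"
    using hint hm by (simp add: p_crit_def gen_fun_phi_eq_expectation)
  moreover have "gen_fun_phi m Xs (real m) \<ge> 0"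
    using gen_fun_phi_nonneg[OF hpos hint hm] .
  ultimately have supercritical: "p * (1 + gen_fun_phi m Xs (real m)) > 1"
    using hp(1) by (simp add: divide_less_eq mult.commute)
  then have "p \<ge> 0"
    using \<open>gen_fun_phi m Xs (real m) \<ge> 0\<close> by (smt (verit) mult_nonpos_nonneg)
  then have "integrable X0 (\<lambda>k. real k * real m ^ k)" "gen_fun_phi m X0 (real m) > 0"
    using gen_fun_phi_mixture[OF hX0 _ hp(2) hint] supercritical hm by auto
  then have int: "integrable ?\<nu> (\<lambda>k. real k * real m ^ k)" and "gen_fun_phi m ?\<nu> (real m) > 0"
    using rec_law_invariant[OF hm] by blast+
  moreover have "\<phi> = gen_fun_phi m ?\<nu>" "\<delta> = gen_fun_phi m ?\<nu> (real m)"
    by (simp_all add: \<phi>_def \<delta>_def H_def H'_def gen_fun_phi_def fun_eq_iff algebra_simps)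
  ultimately show ?thesis
    using mono_on_gen_fun_phi[OF int hm] mono_on_gen_fun_phi_div[OF int hm]
      gen_fun_le_powr_exp[OF int hm] gen_fun_power_div_ge[OF int hm]
    by (simp add: H_def less_imp_le)
qed

end
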